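(* Let $m\geq 3$ and $n\in \mathbb{N}$. Then \[ \sigma'_m(n) =\sum_{k=0}^\infty (-1)^{k+1} \big( P_{m+2,k} \cdot p'_m(n-P_{m+2,k})+ Q_{m+2,k} \cdot p'_m(n-Q_{m+2,k})\big), \] where $P_{m+2,k}=\frac{k(mk-(m-2))}{2}$ and $Q_{m+2,k}=\frac{k(mk+(m-2))}{2}$.
   Context: For $m\ge3$ and $n\in\mathbb{N}$, $\sigma'_m(n)$ is the sum of the positive divisors $d$ of $n$ with $d\equiv 0$, $1$ or $m-1 \pmod m$. $p'_m(n)$ is the number of partitions of $n$ in which every part is congruent to $0$, $1$ or $m-1$ modulo $m$, with $p'_m(0)=1$ and $p'_m(x)=0$ for $x\notin\mathbb{N}_0$. *)

theory Defs
  imports "HOL-Analysis.Analysis" "HOL-Library.Multiset"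
begin

definition admissible :: "nat \<Rightarrow> nat \<Rightarrow> bool" where
  "admissible m d \<longleftrightarrow> d mod m = 0 \<or> d mod m = 1 \<or> d mod m = (m - 1) mod m"

definition sigma' :: "nat \<Rightarrow> nat \<Rightarrow> nat" where
  "sigma' m n = (\<Sum>d \<in> {d. d dvd n \<and> 0 < d \<and> admissible m d}. d)"

definition partitions_of :: "nat \<Rightarrow> nat multiset set" where
  "partitions_of n = {M. (\<forall>x \<in># M. 0 < x) \<and> sum_mset M = n}"

definition p' :: "nat \<Rightarrow> int \<Rightarrow> nat" where
  "p' m x = (if x < 0 then 0
             else card {M \<in> partitions_of (nat x). \<forall>a \<in># M. admissible m a})"

definition Pgon :: "nat \<Rightarrow> nat \<Rightarrow> int" where
  "Pgon m k = (int k * (int m * int k - (int m - 2))) div 2"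

definition Qgon :: "nat \<Rightarrow> nat \<Rightarrow> int" where
  "Qgon m k = (int k * (int m * int k + (int m - 2))) div 2"

end

theory Submission
  imports Defs "HOL-Computational_Algebra.Formal_Power_Series"
begin

text \<open>
  Let \<open>P = \<Prod>\<^sub>d (1 - q\<^sup>d)\<^sup>-\<^sup>1\<close>, over the admissible \<open>d\<close>, be the generating function of \<open>p'\<^sub>m\<close>.
  Counting parts gives \<open>n p'\<^sub>m(n) = \<Sum>\<^sub>j \<sigma>'\<^sub>m(j) p'\<^sub>m(n - j)\<close>, i.e. \<open>\<theta>P = S P\<close> for
  \<open>\<theta> = q d/dq\<close> and \<open>S = \<Sum> \<sigma>'\<^sub>m(n) q\<^sup>n\<close>. Only finite products are needed: for
  \<open>E = \<Prod>\<^bsub>d \<le> B\<^esub> (1 - q\<^sup>d)\<close> this gives \<open>E P = 1\<close> and \<open>(\<theta>E) P = -S\<close> up to degree \<open>B\<close>.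

  The admissible \<open>d \<le> m N\<close> are \<open>m j\<close>, \<open>m j - 1\<close> and \<open>m (j - 1) + 1\<close> for \<open>1 \<le> j \<le> N\<close>, so a finite
  form of Jacobi's triple product, proved with Gaussian binomials, shows that \<open>E\<close> agrees below
  degree \<open>N\<close> with \<open>\<Sum>\<^bsub>|k| \<le> N\<^esub> (-1)\<^sup>k q\<^bsup>g(k)\<^esup>\<close>, where \<open>g(k) = m k (k + 1)/2 - k\<close> is \<open>Q\<^sub>m\<^sub>+\<^sub>2\<^sub>,\<^sub>k\<close>
  for \<open>k \<ge> 0\<close> and \<open>P\<^sub>m\<^sub>+\<^sub>2\<^sub>,\<^sub>-\<^sub>k\<close> for \<open>k < 0\<close>. Comparing the coefficients of \<open>q\<^sup>n\<close> in
  \<open>(\<theta>E) P = -S\<close> gives the identity; the series is a finite sum because \<open>g(k) \<ge> |k|\<close>.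
\<close>

no_notation vec_nth (infixl \<open>$\<close> 90)
notation fps_nth (infixl \<open>$\<close> 75)

text \<open>This simproc turns equations between power series into equations between polynomials,
  which only gets in the way below.\<close>
declare [[simproc del: poly_fps_eq]]

section \<open>Partitions with parts from a given set\<close>

definition restricted_partitions :: "nat set \<Rightarrow> nat \<Rightarrow> nat multiset set" where
  "restricted_partitions A n = {M \<in> partitions_of n. set_mset M \<subseteq> A}"

definition divisor_sum :: "nat set \<Rightarrow> nat \<Rightarrow> nat" where
  "divisor_sum A n = (\<Sum>d \<in> {d. d dvd n \<and> 0 < d \<and> d \<in> A}. d)"

lemma p'_eq_card_restricted_partitions:
  "0 \<le> x \<Longrightarrow> p' m x = card (restricted_partitions {d. admissible m d} (nat x))"
  by (auto simp: p'_def restricted_partitions_def intro!: arg_cong[where f = card])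

lemma sigma'_eq_divisor_sum: "sigma' m n = divisor_sum {d. admissible m d} n"
  by (simp add: sigma'_def divisor_sum_def)

lemma sum_mset_eq_sum_count:
  fixes M :: "nat multiset"
  assumes "finite A" "set_mset M \<subseteq> A"
  shows "sum_mset M = (\<Sum>x\<in>A. count M x * x)"
  using assms(2)
proof (induction M)
  case (add y M)
  have "(\<Sum>x\<in>A. count (add_mset y M) x * x) = (\<Sum>x\<in>A. count M x * x + (if x = y then y else 0))"
    by (intro sum.cong) auto
  also have "\<dots> = (\<Sum>x\<in>A. count M x * x) + y"
    using add.prems assms(1) by (simp add: sum.distrib)
  finally show ?case using add by simp
qed simp

lemma count_mult_le_sum_mset: "count M d * d \<le> sum_mset (M :: nat multiset)"
proof (induction M)
  case (add x M) then show ?case by (cases "x = d") auto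
qed simp

lemma restricted_partitionsD:
  assumes "M \<in> restricted_partitions A n"
  shows "sum_mset M = n" "set_mset M \<subseteq> A" "set_mset M \<subseteq> {1..n}"
proof -
  show "sum_mset M = n" "set_mset M \<subseteq> A"
    using assms by (auto simp: restricted_partitions_def partitions_of_def)
  have "x \<le> sum_mset M" if "x \<in># M" for x
    using that by (induction M) auto
  then show "set_mset M \<subseteq> {1..n}"
    using assms by (fastforce simp: restricted_partitions_def partitions_of_def Suc_le_eq)
qed

lemma finite_restricted_partitions: "finite (restricted_partitions A n)"
proof (rule finite_subset)
  show "restricted_partitions A n \<subseteq> (\<Union>s\<le>n. multisets_of_size {1..n} s)"
  proof
    fix M assume M: "M \<in> restricted_partitions A n"
    have "\<forall>x\<in>#M. 0 < x"
      using M by (simp add: restricted_partitions_def partitions_of_def)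
    then have "size M \<le> sum_mset M"
      by (induction M) (auto simp: Suc_le_eq)
    then show "M \<in> (\<Union>s\<le>n. multisets_of_size {1..n} s)"
      using restricted_partitionsD[OF M] by (auto simp: multisets_of_size_def)
  qed
qed auto

lemma bij_betw_add_replicate_mset:
  assumes "d \<in> A" "0 < d" "r * d \<le> n"
  shows "bij_betw (\<lambda>M. M + replicate_mset r d) (restricted_partitions A (n - r * d))
           {M \<in> restricted_partitions A n. r \<le> count M d}"
proof -
  let ?R = "replicate_mset r d"
  have R_sub: "?R \<subseteq># M" if "r \<le> count M d" for M
    using that by (simp add: subseteq_mset_def)
  show ?thesis
  proof (rule bij_betw_byWitness[where f' = "\<lambda>M. M - ?R"])
    show "\<forall>M \<in> {M \<in> restricted_partitions A n. r \<le> count M d}. M - ?R + ?R = M"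
      using R_sub by (simp add: subset_mset.diff_add)
    show "(\<lambda>M. M + ?R) ` restricted_partitions A (n - r * d)
          \<subseteq> {M \<in> restricted_partitions A n. r \<le> count M d}"
      using assms by (auto simp: restricted_partitions_def partitions_of_def split: if_splits)
    show "(\<lambda>M. M - ?R) ` {M \<in> restricted_partitions A n. r \<le> count M d}
          \<subseteq> restricted_partitions A (n - r * d)"
    proof clarify
      fix M assume M: "M \<in> restricted_partitions A n" "r \<le> count M d"
      have "sum_mset (M - ?R) + r * d = sum_mset (M - ?R + ?R)" by simp
      also have "M - ?R + ?R = M" using R_sub[OF M(2)] by (simp add: subset_mset.diff_add)
      finally have "sum_mset (M - ?R) = n - r * d"
        using restricted_partitionsD(1)[OF M(1)] by simp
      then show "M - ?R \<in> restricted_partitions A (n - r * d)"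
        using M by (auto simp: restricted_partitions_def partitions_of_def dest: in_diffD)
    qed
  qed simp
qed

lemma card_restricted_partitions_count_ge:
  assumes "0 < d" "0 < r"
  shows "card {M \<in> restricted_partitions A n. r \<le> count M d} =
         (if d \<in> A \<and> r * d \<le> n then card (restricted_partitions A (n - r * d)) else 0)"
proof (cases "d \<in> A \<and> r * d \<le> n")
  case True
  then show ?thesis
    using bij_betw_add_replicate_mset[of d A r n] assms(1) by (simp add: bij_betw_same_card)
next
  case False
  have "{M \<in> restricted_partitions A n. r \<le> count M d} = {}"
  proof (intro equals0I, clarify)
    fix M assume M: "M \<in> restricted_partitions A n" "r \<le> count M d"
    then have "d \<in> A"
      using assms(2) restricted_partitionsD(2)[OF M(1)] by (auto simp flip: count_greater_zero_iff)
    moreover have "r * d \<le> n"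
      using mult_le_mono1[OF M(2), of d] count_mult_le_sum_mset[of M d] restricted_partitionsD(1)[OF M(1)]
      by linarith
    ultimately show False using False by blast
  qed
  then show ?thesis using False by (simp only: card.empty if_False)
qed

lemma sum_count_restricted_partitions:
  assumes "0 < d"
  shows "(\<Sum>M \<in> restricted_partitions A n. count M d) =
         (\<Sum>r=1..n. if d \<in> A \<and> r * d \<le> n then card (restricted_partitions A (n - r * d)) else 0)"
proof -
  have "count M d = card {r \<in> {1..n}. r \<le> count M d}" if "M \<in> restricted_partitions A n" for M
  proof -
    have "count M d \<le> count M d * d" using assms by simp
    also have "\<dots> \<le> n"
      using count_mult_le_sum_mset[of M d] restricted_partitionsD(1)[OF that] by simp
    finally have "{r \<in> {1..n}. r \<le> count M d} = {1..count M d}" by auto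
    then show ?thesis by simp
  qed
  then have "(\<Sum>M \<in> restricted_partitions A n. count M d) =
             (\<Sum>M \<in> restricted_partitions A n. card {r \<in> {1..n}. r \<le> count M d})"
    by (rule sum.cong[OF refl])
  also have "\<dots> = (\<Sum>r=1..n. card {M \<in> restricted_partitions A n. r \<le> count M d})"
    using sum.swap_restrict[OF finite_restricted_partitions finite_atLeastAtMost,
        where g = "\<lambda>_ _. 1::nat" and R = "\<lambda>M r. r \<le> count M d"]
    by simp
  finally show ?thesis
    using assms by (simp add: card_restricted_partitions_count_ge)
qed

lemma sum_over_multiples:
  fixes d :: nat
  assumes "0 < d"
  shows "(\<Sum>r=1..n. if r * d \<le> n then f (r * d) else 0) = (\<Sum>j \<in> {j \<in> {1..n}. d dvd j}. f j)"
  unfolding sum.inter_filter[OF finite_atLeastAtMost, symmetric]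
  by (rule sum.reindex_bij_witness[where i = "\<lambda>j. j div d" and j = "\<lambda>r. r * d"])
     (use assms in \<open>auto elim!: dvdE simp: Suc_le_eq intro: le_trans[rotated]\<close>)

text \<open>The parts equal to \<open>d\<close> contribute \<open>d p(n - d) + d p(n - 2d) + \<dots>\<close> to \<open>n p(n)\<close>; collecting
  the terms with \<open>r d = j\<close> gives \<open>\<sigma>(j) p(n - j)\<close>.\<close>
theorem restricted_partitions_recurrence:
  fixes A :: "nat set"
  defines "p \<equiv> \<lambda>k. card (restricted_partitions A k)"
  shows "n * p n = (\<Sum>j=1..n. divisor_sum A j * p (n - j))"
proof -
  have "n * p n = (\<Sum>M \<in> restricted_partitions A n. sum_mset M)"
    by (simp add: p_def restricted_partitionsD(1))
  also have "\<dots> = (\<Sum>M \<in> restricted_partitions A n. \<Sum>d=1..n. count M d * d)"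
    by (intro sum.cong refl sum_mset_eq_sum_count) (simp_all add: restricted_partitionsD(3)[simplified])
  also have "\<dots> = (\<Sum>d=1..n. d * (\<Sum>M \<in> restricted_partitions A n. count M d))"
    by (subst sum.swap) (simp add: sum_distrib_left mult.commute)
  also have "\<dots> = (\<Sum>d=1..n. \<Sum>r=1..n. if r * d \<le> n then (if d \<in> A then d * p (n - r * d) else 0) else 0)"
    by (intro sum.cong refl)
       (simp add: sum_count_restricted_partitions sum_distrib_left, auto simp: p_def intro!: sum.cong)
  also have "\<dots> = (\<Sum>d=1..n. \<Sum>j \<in> {j \<in> {1..n}. d dvd j}. if d \<in> A then d * p (n - j) else 0)"
    by (intro sum.cong refl sum_over_multiples) simp
  also have "\<dots> = (\<Sum>j=1..n. \<Sum>d \<in> {d \<in> {1..n}. d dvd j}. if d \<in> A then d * p (n - j) else 0)"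
    by (rule sum.swap_restrict) simp_all
  also have "\<dots> = (\<Sum>j=1..n. divisor_sum A j * p (n - j))"
  proof (rule sum.cong[OF refl])
    fix j assume "j \<in> {1..n}"
    then have "{d \<in> {d \<in> {1..n}. d dvd j}. d \<in> A} = {d. d dvd j \<and> 0 < d \<and> d \<in> A}"
      by (auto dest: dvd_imp_le)
    then show "(\<Sum>d \<in> {d \<in> {1..n}. d dvd j}. if d \<in> A then d * p (n - j) else 0)
             = divisor_sum A j * p (n - j)"
      by (simp add: sum.inter_filter[symmetric] divisor_sum_def sum_distrib_right)
  qed
  finally show ?thesis .
qed

section \<open>Generating functions and truncated Euler products\<close>

definition fps_theta :: "'a::comm_ring_1 fps \<Rightarrow> 'a fps" where
  "fps_theta f = fps_X * fps_deriv f"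

lemma fps_theta_nth [simp]: "fps_theta f $ n = of_nat n * f $ n"
  by (cases n) (simp_all add: fps_theta_def)

lemma fps_theta_mult: "fps_theta (f * g) = fps_theta f * g + f * fps_theta g"
  by (simp add: fps_theta_def algebra_simps)

definition partition_fps :: "nat set \<Rightarrow> 'a::comm_ring_1 fps" where
  "partition_fps A = Abs_fps (\<lambda>n. of_nat (card (restricted_partitions A n)))"

definition divisor_sum_fps :: "nat set \<Rightarrow> 'a::comm_ring_1 fps" where
  "divisor_sum_fps A = Abs_fps (\<lambda>n. if n = 0 then 0 else of_nat (divisor_sum A n))"

lemma partition_fps_nth_0 [simp]: "partition_fps A $ 0 = 1"
proof -
  have "restricted_partitions A 0 = {{#}}"
    by (auto simp: restricted_partitions_def partitions_of_def)
       (metis gr_implies_not0 multiset_nonemptyE)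
  then show ?thesis by (simp add: partition_fps_def)
qed

lemma fps_theta_partition_fps:
  "fps_theta (partition_fps A) = divisor_sum_fps A * partition_fps A"
proof (rule fps_ext)
  fix n
  have "fps_theta (partition_fps A) $ n = of_nat (n * card (restricted_partitions A n))"
    by (simp add: partition_fps_def)
  also have "\<dots> = of_nat (\<Sum>j=1..n. divisor_sum A j * card (restricted_partitions A (n - j)))"
    by (simp only: restricted_partitions_recurrence)
  also have "\<dots> = (\<Sum>j=0..n. divisor_sum_fps A $ j * partition_fps A $ (n - j))"
    by (simp add: sum.atLeast_Suc_atMost divisor_sum_fps_def partition_fps_def)
  finally show "fps_theta (partition_fps A) $ n = (divisor_sum_fps A * partition_fps A) $ n"
    by (simp add: fps_mult_nth)
qed

text \<open>\<open>multiples_fps d = d X\<^sup>d / (1 - X\<^sup>d)\<close>, so that \<open>\<theta>(1 - X\<^sup>d) = -(1 - X\<^sup>d) multiples_fps d\<close>.\<close>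
definition multiples_fps :: "nat \<Rightarrow> 'a::comm_ring_1 fps" where
  "multiples_fps d = Abs_fps (\<lambda>n. if 0 < n \<and> d dvd n then of_nat d else 0)"

lemma one_minus_X_power_mult_multiples_fps:
  assumes "0 < d"
  shows "(1 - fps_X ^ d) * multiples_fps d = fps_const (of_nat d) * fps_X ^ d"
proof (rule fps_ext)
  fix n
  have "((1 - fps_X ^ d) * multiples_fps d) $ n = multiples_fps d $ n - (fps_X ^ d * multiples_fps d) $ n"
    by (simp add: algebra_simps)
  also have "\<dots> = (fps_const (of_nat d) * fps_X ^ d :: 'a fps) $ n"
  proof (cases "n \<le> d")
    case True
    then show ?thesis
      using assms by (auto simp: fps_X_power_mult_nth multiples_fps_def dest: dvd_imp_le)
  next
    case False
    then have "d dvd n \<longleftrightarrow> d dvd (n - d)" by (simp add: dvd_minus_self)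
    then show ?thesis using False by (simp add: fps_X_power_mult_nth multiples_fps_def)
  qed
  finally show "((1 - fps_X ^ d) * multiples_fps d) $ n = (fps_const (of_nat d) * fps_X ^ d :: 'a fps) $ n" .
qed

lemma fps_theta_prod_one_minus_X_power:
  assumes "finite D" "\<forall>d\<in>D. 0 < d"
  shows "fps_theta (\<Prod>d\<in>D. 1 - fps_X ^ d) =
         - (\<Sum>d\<in>D. multiples_fps d) * (\<Prod>d\<in>D. 1 - fps_X ^ d :: 'a::comm_ring_1 fps)"
  using assms
proof (induction D rule: finite_induct)
  case (insert d D)
  have theta_factor: "fps_theta (1 - fps_X ^ d :: 'a fps) = - ((1 - fps_X ^ d) * multiples_fps d)"
    by (subst one_minus_X_power_mult_multiples_fps) (use insert.prems in \<open>auto intro!: fps_ext\<close>)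
  have "fps_theta ((1 - fps_X ^ d) * (\<Prod>d\<in>D. 1 - fps_X ^ d :: 'a fps))
      = - (multiples_fps d + (\<Sum>d\<in>D. multiples_fps d)) * ((1 - fps_X ^ d) * (\<Prod>d\<in>D. 1 - fps_X ^ d))"
    using insert by (simp only: fps_theta_mult theta_factor) (simp add: algebra_simps)
  with insert show ?case by simp
qed (simp add: fps_theta_def)

lemma prod_one_minus_X_power_nth_0:
  "\<forall>d\<in>D. 0 < d \<Longrightarrow> (\<Prod>d\<in>D. 1 - fps_X ^ d :: 'a::comm_ring_1 fps) $ 0 = 1"
  by (induction D rule: infinite_finite_induct) auto

definition euler_product :: "nat set \<Rightarrow> nat \<Rightarrow> 'a::comm_ring_1 fps" where
  "euler_product A B = (\<Prod>d \<in> {d \<in> A. 0 < d \<and> d \<le> B}. 1 - fps_X ^ d)"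

lemma finite_bounded_parts: "finite {d \<in> A. 0 < d \<and> d \<le> (B::nat)}"
  by (rule finite_subset[of _ "{..B}"]) auto

lemma euler_product_nth_0 [simp]: "euler_product A B $ 0 = 1"
  unfolding euler_product_def by (rule prod_one_minus_X_power_nth_0) simp

lemma fps_theta_euler_product:
  "fps_theta (euler_product A B) =
   - (\<Sum>d \<in> {d \<in> A. 0 < d \<and> d \<le> B}. multiples_fps d) * euler_product A B"
  unfolding euler_product_def
  by (rule fps_theta_prod_one_minus_X_power[OF finite_bounded_parts]) simp

lemma sum_multiples_fps_nth:
  assumes "n \<le> B"
  shows "(\<Sum>d \<in> {d \<in> A. 0 < d \<and> d \<le> B}. multiples_fps d) $ n = (divisor_sum_fps A $ n :: 'a::comm_ring_1)"
proof (cases "n = 0")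
  case False
  then have "{d \<in> {d \<in> A. 0 < d \<and> d \<le> B}. d dvd n} = {d. d dvd n \<and> 0 < d \<and> d \<in> A}"
    using assms by (auto dest: dvd_imp_le)
  then show ?thesis
    using False finite_bounded_parts[of A B]
    by (simp add: fps_sum_nth multiples_fps_def divisor_sum_fps_def divisor_sum_def
        sum.inter_filter[symmetric])
qed (simp add: fps_sum_nth multiples_fps_def divisor_sum_fps_def)

text \<open>\<open>\<theta>(E P) = (S - L) E P\<close>, where \<open>L = -\<theta>E / E\<close> agrees with \<open>S\<close> up to degree \<open>B\<close>, and \<open>\<theta>\<close>
  annihilates only constants.\<close>
theorem euler_product_mult_partition_fps_nth:
  assumes "n \<le> B"
  shows "(euler_product A B * partition_fps A :: 'a::{idom,ring_char_0} fps) $ n =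
         (if n = 0 then 1 else 0)"
proof -
  let ?L = "\<Sum>d \<in> {d \<in> A. 0 < d \<and> d \<le> B}. multiples_fps d :: 'a fps"
  let ?R = "euler_product A B * partition_fps A :: 'a fps"
  have "fps_theta ?R = (divisor_sum_fps A - ?L) * ?R"
    by (simp add: fps_theta_mult fps_theta_partition_fps fps_theta_euler_product algebra_simps)
  then have "fps_theta ?R $ n = (\<Sum>i=0..n. (divisor_sum_fps A - ?L) $ i * ?R $ (n - i))"
    by (simp add: fps_mult_nth)
  also have "\<dots> = 0"
    using assms by (intro sum.neutral) (simp add: sum_multiples_fps_nth)
  finally show ?thesis by auto
qed

theorem fps_theta_euler_product_mult_partition_fps_nth:
  assumes "n \<le> B"
  shows "(fps_theta (euler_product A B) * partition_fps A :: 'a::{idom,ring_char_0} fps) $ n =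
         - divisor_sum_fps A $ n"
proof -
  let ?L = "\<Sum>d \<in> {d \<in> A. 0 < d \<and> d \<le> B}. multiples_fps d :: 'a fps"
  have theta: "fps_theta (euler_product A B) * partition_fps A = - (?L * (euler_product A B * partition_fps A))"
    by (simp add: fps_theta_euler_product)
  have "(?L * (euler_product A B * partition_fps A)) $ n
      = (\<Sum>i=0..n. ?L $ i * (euler_product A B * partition_fps A) $ (n - i))"
    by (rule fps_mult_nth)
  also have "\<dots> = (\<Sum>i=0..n. if i = n then ?L $ i else 0)"
    using assms by (intro sum.cong refl) (auto simp: euler_product_mult_partition_fps_nth)
  also have "\<dots> = ?L $ n" by simp
  finally show ?thesis using assms by (simp add: theta sum_multiples_fps_nth)
qed

corollary sum_coeffs_euler_product_partitions:
  assumes "0 < n" "n \<le> B"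
  shows "(\<Sum>j=0..n. of_nat j * of_nat (card (restricted_partitions A (n - j))) * euler_product A B $ j) =
         - (of_nat (divisor_sum A n) :: 'a::{idom,ring_char_0})"
proof -
  have "(\<Sum>j=0..n. of_nat j * of_nat (card (restricted_partitions A (n - j))) * euler_product A B $ j) =
        (fps_theta (euler_product A B) * partition_fps A :: 'a fps) $ n"
    by (simp add: fps_mult_nth partition_fps_def mult_ac)
  also have "\<dots> = - divisor_sum_fps A $ n"
    using assms(2) by (rule fps_theta_euler_product_mult_partition_fps_nth)
  finally show ?thesis using assms(1) by (simp add: divisor_sum_fps_def)
qed

section \<open>Gaussian binomials and a finite Jacobi triple product\<close>

fun qbinom :: "'a::comm_ring_1 \<Rightarrow> nat \<Rightarrow> nat \<Rightarrow> 'a" where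
  "qbinom q 0 r = (if r = 0 then 1 else 0)"
| "qbinom q (Suc n) 0 = 1"
| "qbinom q (Suc n) (Suc r) = qbinom q n r + q ^ Suc r * qbinom q n (Suc r)"

definition qpochhammer :: "'a::comm_ring_1 \<Rightarrow> nat \<Rightarrow> 'a" where
  "qpochhammer q n = (\<Prod>j\<in>{1..n}. 1 - q ^ j)"

lemma qpochhammer_0 [simp]: "qpochhammer q 0 = 1" by (simp add: qpochhammer_def)
lemma qpochhammer_Suc: "qpochhammer q (Suc n) = qpochhammer q n * (1 - q ^ Suc n)"
  by (simp add: qpochhammer_def prod.cl_ivl_Suc)

lemma qbinom_0_right [simp]: "qbinom q n 0 = 1" by (cases n) auto

lemma qbinom_eq_0: "n < r \<Longrightarrow> qbinom q n r = 0"
proof (induction n arbitrary: r)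
  case 0 then show ?case by simp
next
  case (Suc n) then show ?case by (cases r) auto
qed

lemma qbinom_Pascal_terms:
  assumes row: "\<And>s. s \<le> n \<Longrightarrow> qbinom q n s * qpochhammer q s * qpochhammer q (n - s) = qpochhammer q n"
    and "r \<le> n"
  shows "qbinom q n r * (qpochhammer q (Suc r) * qpochhammer q (n - r)) = (1 - q ^ Suc r) * qpochhammer q n"
    and "qbinom q n (Suc r) * (qpochhammer q (Suc r) * qpochhammer q (n - r)) =
         (1 - q ^ (n - r)) * qpochhammer q n"
proof -
  have "qbinom q n r * (qpochhammer q (Suc r) * qpochhammer q (n - r)) =
        (1 - q ^ Suc r) * (qbinom q n r * qpochhammer q r * qpochhammer q (n - r))"
    by (simp only: qpochhammer_Suc mult_ac)
  then show "qbinom q n r * (qpochhammer q (Suc r) * qpochhammer q (n - r)) = (1 - q ^ Suc r) * qpochhammer q n"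
    using row[OF \<open>r \<le> n\<close>] by simp
  show "qbinom q n (Suc r) * (qpochhammer q (Suc r) * qpochhammer q (n - r)) =
        (1 - q ^ (n - r)) * qpochhammer q n"
  proof (cases "r = n")
    case False
    then have "Suc r \<le> n" and n_minus_r: "n - r = Suc (n - Suc r)" using \<open>r \<le> n\<close> by simp_all
    have "qbinom q n (Suc r) * (qpochhammer q (Suc r) * qpochhammer q (n - r)) =
          (1 - q ^ (n - r)) * (qbinom q n (Suc r) * qpochhammer q (Suc r) * qpochhammer q (n - Suc r))"
      by (simp only: n_minus_r qpochhammer_Suc[of q "n - Suc r"] mult_ac)
    then show ?thesis using row[OF \<open>Suc r \<le> n\<close>] by simp
  qed (simp add: qbinom_eq_0)
qed

lemma power_Suc_mult_power_diff:
  fixes q :: "'a::monoid_mult"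
  assumes "r \<le> n"
  shows "q ^ Suc r * q ^ (n - r) = q ^ Suc n"
proof -
  have "Suc n = Suc r + (n - r)" using assms by simp
  then show ?thesis by (simp only: power_add)
qed

lemma qbinom_mult_qpochhammer:
  "r \<le> n \<Longrightarrow> qbinom q n r * qpochhammer q r * qpochhammer q (n - r) = qpochhammer q n"
proof (induction n arbitrary: r)
  case (Suc n r)
  show ?case
  proof (cases r)
    case (Suc r')
    then have "r' \<le> n" using Suc.prems by simp
    let ?c = "qpochhammer q (Suc r') * qpochhammer q (n - r')"
    have "qbinom q (Suc n) r * qpochhammer q r * qpochhammer q (Suc n - r)
        = qbinom q n r' * ?c + q ^ Suc r' * (qbinom q n (Suc r') * ?c)"
      by (simp add: \<open>r = Suc r'\<close> algebra_simps)
    also have "\<dots> = (1 - q ^ Suc r') * qpochhammer q n + q ^ Suc r' * ((1 - q ^ (n - r')) * qpochhammer q n)"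
      by (simp only: qbinom_Pascal_terms[OF Suc.IH \<open>r' \<le> n\<close>])
    also have "\<dots> = qpochhammer q n * (1 - q ^ Suc r' * q ^ (n - r'))"
      by (simp add: algebra_simps)
    also have "\<dots> = qpochhammer q (Suc n)"
      by (simp only: power_Suc_mult_power_diff[OF \<open>r' \<le> n\<close>] qpochhammer_Suc)
    finally show ?thesis .
  qed simp
qed simp

lemma qbinom_Suc_Suc':
  fixes q :: "'a::idom"
  assumes "\<And>k. qpochhammer q k \<noteq> 0" and "r \<le> n"
  shows "qbinom q (Suc n) (Suc r) = q ^ (n - r) * qbinom q n r + qbinom q n (Suc r)"
proof -
  let ?c = "qpochhammer q (Suc r) * qpochhammer q (n - r)"
  have "(q ^ (n - r) * qbinom q n r + qbinom q n (Suc r)) * ?c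
      = q ^ (n - r) * (qbinom q n r * ?c) + qbinom q n (Suc r) * ?c"
    by (simp add: algebra_simps)
  also have "\<dots> = q ^ (n - r) * ((1 - q ^ Suc r) * qpochhammer q n) + (1 - q ^ (n - r)) * qpochhammer q n"
    by (simp only: qbinom_Pascal_terms[OF qbinom_mult_qpochhammer assms(2)])
  also have "\<dots> = qpochhammer q n * (1 - q ^ Suc r * q ^ (n - r))"
    by (simp add: algebra_simps)
  also have "\<dots> = qpochhammer q (Suc n)"
    by (simp only: power_Suc_mult_power_diff[OF assms(2)] qpochhammer_Suc)
  also have "\<dots> = qbinom q (Suc n) (Suc r) * ?c"
    using qbinom_mult_qpochhammer[of "Suc r" "Suc n" q] assms(2) by (simp add: mult.assoc)
  finally show ?thesis using assms(1) by simp
qed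

definition triangular :: "int \<Rightarrow> int" where
  "triangular k = k * (k + 1) div 2"

lemma double_triangular: "2 * triangular k = k * (k + 1)"
proof -
  have "even (k * (k + 1))" by simp
  then show ?thesis unfolding triangular_def by simp
qed

lemma triangular_add_1: "triangular (k + 1) = triangular k + (k + 1)"
proof -
  have "2 * triangular (k + 1) = 2 * (triangular k + (k + 1))"
    unfolding distrib_left double_triangular by (simp add: algebra_simps)
  then show ?thesis by simp
qed

lemma triangular_nonneg: "0 \<le> triangular k"
proof -
  have "0 \<le> k * (k + 1)" by (cases "0 \<le> k") (auto simp: zero_le_mult_iff)
  then show ?thesis using double_triangular[of k] by simp
qed

lemma le_triangular: "k \<le> triangular k"
proof -
  have "0 \<le> k * (k - 1)" by (cases "1 \<le> k") (auto simp: zero_le_mult_iff)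
  then show ?thesis using double_triangular[of k] by (simp add: algebra_simps)
qed

definition jtp_exponent :: "nat \<Rightarrow> nat \<Rightarrow> nat" where
  "jtp_exponent n i = nat (triangular (int i - int ((n + 1) div 2)))"

lemma int_jtp_exponent: "int (jtp_exponent n i) = triangular (int i - int ((n + 1) div 2))"
  using triangular_nonneg by (simp add: jtp_exponent_def)

lemma jtp_exponent_even_Suc_Suc: "even n \<Longrightarrow> jtp_exponent (Suc n) (Suc i) = jtp_exponent n i"
  by (auto simp: jtp_exponent_def elim!: evenE)

lemma jtp_exponent_even_Suc:
  assumes "even n"
  shows "jtp_exponent n i + n div 2 = i + jtp_exponent (Suc n) i"
proof -
  obtain N where n: "n = 2 * N" using assms by (auto elim!: evenE)
  have "triangular (int i - int N) = triangular (int i - (1 + int N)) + (int i - int N)"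
    using triangular_add_1[of "int i - (1 + int N)"] by (simp add: algebra_simps)
  then have "int (jtp_exponent n i + n div 2) = int (i + jtp_exponent (Suc n) i)"
    using n by (simp add: int_jtp_exponent)
  then show ?thesis by (simp only: of_nat_eq_iff)
qed

lemma jtp_exponent_odd_Suc: "odd n \<Longrightarrow> jtp_exponent (Suc n) i = jtp_exponent n i"
  by (auto simp: jtp_exponent_def elim!: oddE)

lemma jtp_exponent_odd_Suc_Suc:
  assumes "odd n" "i \<le> n"
  shows "(n - i) + jtp_exponent (Suc n) (Suc i) = jtp_exponent n i + Suc (n div 2)"
proof -
  obtain N where n: "n = 2 * N + 1" using assms(1) by (auto elim!: oddE)
  have "triangular (int i - int N) = triangular (int i - (1 + int N)) + (int i - int N)"
    using triangular_add_1[of "int i - (1 + int N)"] by (simp add: algebra_simps)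
  then have "int ((n - i) + jtp_exponent (Suc n) (Suc i)) = int (jtp_exponent n i + Suc (n div 2))"
    using n assms(2) by (simp add: int_jtp_exponent)
  then show ?thesis by (simp only: of_nat_eq_iff)
qed

text \<open>The factors are \<open>z + w q\<^bsup>j-1\<^esup>\<close> (for \<open>l = 2j - 1\<close>) and \<open>w + z q\<^sup>j\<close> (for \<open>l = 2j\<close>), the
  homogenised factors \<open>(x + q\<^bsup>j-1\<^esup>)(1 + x q\<^sup>j)\<close> of the usual finite triple product. Interleaving
  them lets the identity be proved one factor at a time.\<close>
definition jtp_factor :: "'a::comm_ring_1 \<Rightarrow> 'a \<Rightarrow> 'a \<Rightarrow> nat \<Rightarrow> 'a" where
  "jtp_factor z w q l = (if odd l then z + w * q ^ (l div 2) else w + z * q ^ (l div 2))"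

definition jtp_sum :: "'a::comm_ring_1 \<Rightarrow> 'a \<Rightarrow> 'a \<Rightarrow> nat \<Rightarrow> 'a" where
  "jtp_sum z w q n = (\<Sum>i=0..n. qbinom q n i * z ^ i * w ^ (n - i) * q ^ jtp_exponent n i)"

lemma jtp_sum_Suc:
  "jtp_sum z w q (Suc n) = w ^ Suc n * q ^ jtp_exponent (Suc n) 0 +
     (\<Sum>i=0..n. qbinom q (Suc n) (Suc i) * z ^ Suc i * w ^ (n - i) * q ^ jtp_exponent (Suc n) (Suc i))"
  unfolding jtp_sum_def by (simp only: sum.atLeast0_atMost_Suc_shift) simp

lemma jtp_sum_Suc_even:
  assumes "even n"
  shows "jtp_sum z w q (Suc n) = jtp_sum z w q n * jtp_factor z w q (Suc n)"
proof -
  let ?N = "n div 2"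
  have "jtp_sum z w q n * jtp_factor z w q (Suc n)
      = (\<Sum>i=0..n. qbinom q n i * z ^ i * w ^ (n - i) * q ^ jtp_exponent n i * z)
      + (\<Sum>i=0..n. qbinom q n i * z ^ i * w ^ (n - i) * q ^ jtp_exponent n i * (w * q ^ ?N))"
    using assms by (simp add: jtp_sum_def jtp_factor_def distrib_left sum_distrib_right)
  also have "\<dots> = (\<Sum>i=0..n. qbinom q n i * z ^ Suc i * w ^ (n - i) * q ^ jtp_exponent n i)
      + (\<Sum>i=0..n. qbinom q n i * z ^ i * w ^ (Suc n - i) * q ^ (jtp_exponent n i + ?N))"
    by (intro arg_cong2[where f = "(+)"] sum.cong refl) (simp_all add: Suc_diff_le power_add mult_ac)
  also have "(\<Sum>i=0..n. qbinom q n i * z ^ i * w ^ (Suc n - i) * q ^ (jtp_exponent n i + ?N))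
      = (\<Sum>i=0..Suc n. qbinom q n i * z ^ i * w ^ (Suc n - i) * q ^ (jtp_exponent n i + ?N))"
    by (simp add: qbinom_eq_0)
  also have "\<dots> = w ^ Suc n * q ^ jtp_exponent (Suc n) 0
      + (\<Sum>i=0..n. qbinom q n (Suc i) * z ^ Suc i * w ^ (n - i) * q ^ (Suc i + jtp_exponent (Suc n) (Suc i)))"
    by (simp only: sum.atLeast0_atMost_Suc_shift) (simp add: jtp_exponent_even_Suc[OF assms])
  also have "(\<Sum>i=0..n. qbinom q n i * z ^ Suc i * w ^ (n - i) * q ^ jtp_exponent n i)
      + (w ^ Suc n * q ^ jtp_exponent (Suc n) 0
      + (\<Sum>i=0..n. qbinom q n (Suc i) * z ^ Suc i * w ^ (n - i) * q ^ (Suc i + jtp_exponent (Suc n) (Suc i))))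
      = jtp_sum z w q (Suc n)"
    by (simp add: jtp_sum_Suc sum.distrib[symmetric] jtp_exponent_even_Suc_Suc[OF assms] algebra_simps power_add)
  finally show ?thesis ..
qed

lemma jtp_sum_Suc_odd:
  fixes q :: "'a::idom"
  assumes "\<And>k. qpochhammer q k \<noteq> 0" and "odd n"
  shows "jtp_sum z w q (Suc n) = jtp_sum z w q n * jtp_factor z w q (Suc n)"
proof -
  let ?N = "n div 2"
  have "jtp_sum z w q n * jtp_factor z w q (Suc n)
      = (\<Sum>i=0..n. qbinom q n i * z ^ i * w ^ (n - i) * q ^ jtp_exponent n i * w)
      + (\<Sum>i=0..n. qbinom q n i * z ^ i * w ^ (n - i) * q ^ jtp_exponent n i * (z * q ^ Suc ?N))"
    using assms(2) by (simp add: jtp_sum_def jtp_factor_def distrib_left sum_distrib_right)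
  also have "\<dots> = (\<Sum>i=0..n. qbinom q n i * z ^ i * w ^ (Suc n - i) * q ^ jtp_exponent n i)
      + (\<Sum>i=0..n. qbinom q n i * z ^ Suc i * w ^ (n - i) * q ^ (jtp_exponent n i + Suc ?N))"
    by (intro arg_cong2[where f = "(+)"] sum.cong refl) (simp_all add: Suc_diff_le power_add mult_ac)
  also have "(\<Sum>i=0..n. qbinom q n i * z ^ i * w ^ (Suc n - i) * q ^ jtp_exponent n i)
      = (\<Sum>i=0..Suc n. qbinom q n i * z ^ i * w ^ (Suc n - i) * q ^ jtp_exponent n i)"
    by (simp add: qbinom_eq_0)
  also have "\<dots> = w ^ Suc n * q ^ jtp_exponent (Suc n) 0
      + (\<Sum>i=0..n. qbinom q n (Suc i) * z ^ Suc i * w ^ (n - i) * q ^ jtp_exponent (Suc n) (Suc i))"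
    by (simp only: sum.atLeast0_atMost_Suc_shift) (simp add: jtp_exponent_odd_Suc[OF assms(2)])
  also have "(\<Sum>i=0..n. qbinom q n i * z ^ Suc i * w ^ (n - i) * q ^ (jtp_exponent n i + Suc ?N))
      = (\<Sum>i=0..n. qbinom q n i * z ^ Suc i * w ^ (n - i) * (q ^ (n - i) * q ^ jtp_exponent (Suc n) (Suc i)))"
    by (intro sum.cong refl)
       (simp only: power_add[symmetric] jtp_exponent_odd_Suc_Suc[OF assms(2)] atLeastAtMost_iff)
  also have "w ^ Suc n * q ^ jtp_exponent (Suc n) 0
      + (\<Sum>i=0..n. qbinom q n (Suc i) * z ^ Suc i * w ^ (n - i) * q ^ jtp_exponent (Suc n) (Suc i))
      + (\<Sum>i=0..n. qbinom q n i * z ^ Suc i * w ^ (n - i) * (q ^ (n - i) * q ^ jtp_exponent (Suc n) (Suc i)))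
      = jtp_sum z w q (Suc n)"
    unfolding jtp_sum_Suc
    by (simp add: sum.distrib[symmetric] qbinom_Suc_Suc'[OF assms(1)] algebra_simps del: qbinom.simps(3))
  finally show ?thesis ..
qed

theorem finite_jacobi_triple_product:
  fixes q :: "'a::idom"
  assumes "\<And>k. qpochhammer q k \<noteq> 0"
  shows "(\<Prod>l=1..n. jtp_factor z w q l) = jtp_sum z w q n"
proof (induction n)
  case 0
  then show ?case by (simp add: jtp_sum_def jtp_exponent_def triangular_def)
next
  case (Suc n)
  have "jtp_sum z w q (Suc n) = jtp_sum z w q n * jtp_factor z w q (Suc n)"
    using jtp_sum_Suc_even jtp_sum_Suc_odd[OF assms] by (cases "even n") simp_all
  with Suc show ?case by (simp add: prod.cl_ivl_Suc)
qed

section \<open>Power series agreeing below a given degree\<close>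

definition agree_below :: "nat \<Rightarrow> 'a::comm_ring_1 fps \<Rightarrow> 'a fps \<Rightarrow> bool" where
  "agree_below B f g \<longleftrightarrow> (\<forall>n<B. f $ n = g $ n)"

lemma agree_below_refl [simp]: "agree_below B f f"
  by (simp add: agree_below_def)

lemma agree_below_trans: "agree_below B f g \<Longrightarrow> agree_below B g h \<Longrightarrow> agree_below B f h"
  by (simp add: agree_below_def)

lemma agree_below_mono: "agree_below B f g \<Longrightarrow> B' \<le> B \<Longrightarrow> agree_below B' f g"
  by (simp add: agree_below_def)

lemma agree_below_mult:
  "agree_below B f g \<Longrightarrow> agree_below B f' g' \<Longrightarrow> agree_below B (f * f') (g * g')"
  unfolding agree_below_def fps_mult_nth by (auto intro!: sum.cong)

lemma agree_below_sum:
  "(\<And>i. i \<in> I \<Longrightarrow> agree_below B (f i) (g i)) \<Longrightarrow> agree_below B (sum f I) (sum g I)"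
  unfolding agree_below_def fps_sum_nth by (auto intro!: sum.cong)

lemma agree_below_one_minus_X_power: "B \<le> d \<Longrightarrow> agree_below B (1 - fps_X ^ d) 1"
  by (simp add: agree_below_def)

lemma agree_below_mult_X_power:
  "agree_below B f 1 \<Longrightarrow> agree_below (B + c) (f * fps_X ^ c) (fps_X ^ c)"
  by (auto simp: agree_below_def fps_X_power_mult_right_nth)

lemma agree_below_X_power_mult_cancel:
  "agree_below (B + N) (fps_X ^ N * f) (fps_X ^ N * g) \<Longrightarrow> agree_below B f g"
  unfolding agree_below_def by (metis fps_X_power_mult_nth add.commute add_less_cancel_left
      add_diff_cancel_left' le_add1 not_le)

lemma agree_below_cancel:
  assumes "a $ 0 = 1" "agree_below B (a * f) (a * g)"
  shows "agree_below B f g"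
  unfolding agree_below_def
proof (intro allI impI)
  fix n assume "n < B"
  then show "f $ n = g $ n"
  proof (induction n rule: less_induct)
    case (less n)
    have "f $ n + (\<Sum>i=1..n. a $ i * f $ (n - i)) = (a * f) $ n"
      using assms(1) by (simp add: fps_mult_nth sum.atLeast_Suc_atMost)
    also have "\<dots> = (a * g) $ n"
      using assms(2) less.prems by (simp add: agree_below_def)
    also have "\<dots> = g $ n + (\<Sum>i=1..n. a $ i * g $ (n - i))"
      using assms(1) by (simp add: fps_mult_nth sum.atLeast_Suc_atMost)
    also have "(\<Sum>i=1..n. a $ i * g $ (n - i)) = (\<Sum>i=1..n. a $ i * f $ (n - i))"
      using less by (intro sum.cong refl) simp
    finally show ?case by simp
  qed
qed

lemma qpochhammer_X_power_nth_0 [simp]: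
  "0 < m \<Longrightarrow> qpochhammer (fps_X ^ m :: 'a::comm_ring_1 fps) k $ 0 = 1"
  by (induction k) (simp_all add: qpochhammer_Suc power_mult[symmetric])

lemma agree_below_qpochhammer_X_power:
  assumes "0 < m" "r \<le> M"
  shows "agree_below (m * (r + 1)) (qpochhammer (fps_X ^ m :: 'a::comm_ring_1 fps) M)
                                   (qpochhammer (fps_X ^ m) r)"
  using assms(2)
proof (induction M rule: dec_induct)
  case (step M)
  have "agree_below (m * (r + 1)) (1 - (fps_X ^ m) ^ Suc M) (1 :: 'a fps)"
    unfolding power_mult[symmetric] using step.hyps by (intro agree_below_one_minus_X_power) simp
  with step.IH show ?case
    using agree_below_mult by (fastforce simp: qpochhammer_Suc)
qed simp

text \<open>Let \<open>s \<le> t\<close> be \<open>r\<close> and \<open>n - r\<close>. Since \<open>(q;q)\<^sub>n\<close> agrees with \<open>(q;q)\<^sub>t\<close> below degree \<open>m (t + 1)\<close>,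
  cancelling \<open>(q;q)\<^sub>t\<close> from \<open>[n, r] (q;q)\<^sub>s (q;q)\<^sub>t = (q;q)\<^sub>n\<close> leaves \<open>[n, r] (q;q)\<^sub>s \<approx> 1\<close>; and
  \<open>(q;q)\<^sub>M\<close> agrees with \<open>(q;q)\<^sub>s\<close> below degree \<open>m (s + 1)\<close>.\<close>
lemma agree_below_qbinom_X_power:
  fixes q :: "'a::comm_ring_1 fps" and m :: nat
  defines "q \<equiv> fps_X ^ m"
  assumes m: "0 < m" and r: "r \<le> n" and M: "min r (n - r) \<le> M"
  shows "agree_below (m * (min r (n - r) + 1)) (qbinom q n r * qpochhammer q M) 1"
proof -
  have prod: "qbinom q n r * qpochhammer q r * qpochhammer q (n - r) = qpochhammer q n"
    using r by (rule qbinom_mult_qpochhammer)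
  have key: "agree_below (m * (s + 1)) (qbinom q n r * qpochhammer q M) 1"
    if s: "s \<le> t" "s \<le> M" "{s, t} = {r, n - r}" for s t
  proof -
    have t: "t \<le> n" using that r by auto
    have "qbinom q n r * qpochhammer q s * qpochhammer q t = qpochhammer q n"
      using prod that by (auto simp: doubleton_eq_iff mult_ac)
    moreover have "agree_below (m * (t + 1)) (qpochhammer q n) (qpochhammer q t)"
      unfolding q_def using m t by (rule agree_below_qpochhammer_X_power)
    ultimately have "agree_below (m * (t + 1)) (qpochhammer q t * (qbinom q n r * qpochhammer q s))
                                               (qpochhammer q t * 1)"
      by (simp add: mult_ac)
    then have "agree_below (m * (t + 1)) (qbinom q n r * qpochhammer q s) 1"
      by (rule agree_below_cancel[rotated]) (simp add: q_def m)
    then have "agree_below (m * (s + 1)) (qbinom q n r * qpochhammer q s) 1"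
      by (rule agree_below_mono) (use s in simp)
    moreover have "agree_below (m * (s + 1)) (qbinom q n r * qpochhammer q M) (qbinom q n r * qpochhammer q s)"
      unfolding q_def using m s by (intro agree_below_mult agree_below_refl agree_below_qpochhammer_X_power)
    ultimately show ?thesis by (blast intro: agree_below_trans)
  qed
  show ?thesis
  proof (cases "r \<le> n - r")
    case True
    then show ?thesis using key[of r "n - r"] M by (simp add: min_def)
  next
    case False
    then show ?thesis using key[of "n - r" r] M by (simp add: min_def insert_commute)
  qed
qed

section \<open>The Euler product over the residues \<open>0, \<plusminus>1\<close> modulo \<open>m\<close>\<close>

definition unit_residue_product :: "nat \<Rightarrow> nat \<Rightarrow> 'a::comm_ring_1 fps" where
  "unit_residue_product m N = (\<Prod>j=1..N. (1 - fps_X ^ (m * j - 1)) * (1 - fps_X ^ (m * (j - 1) + 1)))"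

lemma prod_jtp_factor_X_power:
  assumes "0 < m"
  shows "(\<Prod>l=1..2*N. jtp_factor (-1) fps_X (fps_X ^ m) l) =
         (-1) ^ N * fps_X ^ N * (unit_residue_product m N :: 'a::comm_ring_1 fps)"
proof (induction N)
  case (Suc N)
  have "m * Suc N = Suc (m * Suc N - 1)" using assms by simp
  then have X_power: "(fps_X ^ m) ^ Suc N = (fps_X * fps_X ^ (m * Suc N - 1) :: 'a fps)"
    by (metis power_Suc power_mult)
  have split: "(\<Prod>l=1..2 * Suc N. jtp_factor (-1) fps_X (fps_X ^ m) l) =
      (\<Prod>l=1..2 * N. jtp_factor (-1) fps_X (fps_X ^ m) l) *
      jtp_factor (-1) fps_X (fps_X ^ m) (Suc (2 * N)) * jtp_factor (-1) (fps_X :: 'a fps) (fps_X ^ m) (Suc (Suc (2 * N)))"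
    by (simp add: prod.cl_ivl_Suc mult.assoc)
  have residue_Suc: "unit_residue_product m (Suc N) = (unit_residue_product m N :: 'a fps) *
      ((1 - fps_X ^ (m * Suc N - 1)) * (1 - fps_X ^ (m * N + 1)))"
    by (simp add: unit_residue_product_def prod.cl_ivl_Suc)
  have "jtp_factor (-1) fps_X (fps_X ^ m) (Suc (Suc (2 * N))) = fps_X + (-1) * (fps_X ^ m) ^ Suc N"
    by (simp add: jtp_factor_def)
  also have "\<dots> = (fps_X * (1 - fps_X ^ (m * Suc N - 1)) :: 'a fps)"
    by (simp only: X_power) (simp add: algebra_simps)
  finally have even_factor: "jtp_factor (-1) fps_X (fps_X ^ m) (Suc (Suc (2 * N))) =
      (fps_X * (1 - fps_X ^ (m * Suc N - 1)) :: 'a fps)" .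
  have odd_factor: "jtp_factor (-1) fps_X (fps_X ^ m) (Suc (2 * N)) = - (1 - fps_X ^ (m * N + 1) :: 'a fps)"
    by (simp add: jtp_factor_def power_mult[symmetric] power_add)
  show ?case
    unfolding split even_factor odd_factor Suc.IH residue_Suc by (simp add: mult_ac) (simp add: algebra_simps)
qed (simp add: unit_residue_product_def)

lemma admissible_mult_add:
  assumes "3 \<le> m" "1 \<le> t" "t \<le> m"
  shows "admissible m (m * N + t) \<longleftrightarrow> t = 1 \<or> t = m - 1 \<or> t = m"
proof -
  have "(m * N + t) mod m = (if t = m then 0 else t)"
    using assms by auto
  moreover have "(m - 1) mod m = m - 1" using assms by simp
  ultimately show ?thesis unfolding admissible_def using assms by auto
qed

lemma admissible_parts_Suc:
  assumes "3 \<le> m"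
  shows "{d \<in> {d. admissible m d}. 0 < d \<and> d \<le> m * Suc N} =
         insert (m * N + 1) (insert (m * N + (m - 1)) (insert (m * N + m)
           {d \<in> {d. admissible m d}. 0 < d \<and> d \<le> m * N}))"
    (is "?L = ?R")
proof (intro set_eqI iffI)
  fix d assume "d \<in> ?L"
  show "d \<in> ?R"
  proof (cases "d \<le> m * N")
    case False
    define t where "t = d - m * N"
    have "d = m * N + t" "1 \<le> t" "t \<le> m"
      using False \<open>d \<in> ?L\<close> by (auto simp: t_def)
    then show ?thesis
      using \<open>d \<in> ?L\<close> admissible_mult_add[OF assms, of t N] by auto
  qed (use \<open>d \<in> ?L\<close> in auto)
next
  have "admissible m (m * N + 1)" "admissible m (m * N + (m - 1))" "admissible m (m * N + m)"
    using assms by (subst admissible_mult_add[OF assms]; simp)+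
  then show "d \<in> ?L" if "d \<in> ?R" for d
    using that assms by auto
qed

lemma euler_product_admissible:
  assumes "3 \<le> m"
  shows "euler_product {d. admissible m d} (m * N) =
         qpochhammer (fps_X ^ m) N * (unit_residue_product m N :: 'a::comm_ring_1 fps)"
proof (induction N)
  case 0
  have "{d \<in> {d. admissible m d}. 0 < d \<and> d \<le> 0} = {}" by auto
  then show ?case
    unfolding euler_product_def unit_residue_product_def mult_0_right by (simp only: prod.empty) simp
next
  case (Suc N)
  let ?S = "{d \<in> {d. admissible m d}. 0 < d \<and> d \<le> m * N}"
  have new_parts: "m * N + 1 \<notin> insert (m * N + (m - 1)) (insert (m * N + m) ?S)"
    "m * N + (m - 1) \<notin> insert (m * N + m) ?S" "m * N + m \<notin> ?S"
    using assms by auto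
  have "euler_product {d. admissible m d} (m * Suc N) =
        (1 - fps_X ^ (m * N + 1)) * ((1 - fps_X ^ (m * N + (m - 1))) * ((1 - fps_X ^ (m * N + m)) *
        (euler_product {d. admissible m d} (m * N) :: 'a fps)))"
    unfolding euler_product_def admissible_parts_Suc[OF assms]
    by (simp only: prod.insert finite_insert finite_bounded_parts new_parts not_False_eq_True)
  moreover have "m * Suc N - 1 = m * N + (m - 1)"
    using assms by simp
  moreover have "(fps_X ^ m) ^ Suc N = (fps_X ^ (m * N + m) :: 'a fps)"
    by (simp add: power_mult[symmetric] power_add mult.commute)
  ultimately show ?case
    using Suc.IH by (simp add: qpochhammer_Suc unit_residue_product_def prod.cl_ivl_Suc mult_ac)
qed

definition gonal :: "nat \<Rightarrow> int \<Rightarrow> int" where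
  "gonal m k = int m * triangular k - k"

lemma double_gonal: "2 * gonal m k = k * (int m * k + (int m - 2))"
proof -
  have "2 * gonal m k = int m * (2 * triangular k) - 2 * k"
    by (simp add: gonal_def algebra_simps)
  also have "\<dots> = int m * (k * (k + 1)) - 2 * k"
    by (simp only: double_triangular)
  finally show ?thesis by (simp add: algebra_simps)
qed

lemma Qgon_eq_gonal: "Qgon m k = gonal m (int k)"
  unfolding Qgon_def double_gonal[symmetric] by simp

lemma Pgon_eq_gonal: "Pgon m k = gonal m (- int k)"
proof -
  have "int k * (int m * int k - (int m - 2)) = 2 * gonal m (- int k)"
    by (simp add: double_gonal algebra_simps)
  then show ?thesis unfolding Pgon_def by simp
qed

lemma abs_le_gonal:
  assumes "2 \<le> m"
  shows "\<bar>k\<bar> \<le> gonal m k"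
proof -
  have "2 * triangular k \<le> int m * triangular k"
    using assms triangular_nonneg[of k] by (intro mult_right_mono) simp_all
  then show ?thesis
    using le_triangular[of k] triangular_nonneg[of k] by (simp add: gonal_def abs_if)
qed

lemma p'_minus_gonal_eq_0:
  assumes "2 \<le> m" "int n < \<bar>k\<bar>"
  shows "p' m (int n - gonal m k) = 0"
  using abs_le_gonal[OF assms(1), of k] assms(2) by (simp add: p'_def)

definition gonal_series :: "nat \<Rightarrow> nat \<Rightarrow> 'a::comm_ring_1 fps" where
  "gonal_series m N = (\<Sum>k \<in> {-int N..int N}. (-1) ^ nat \<bar>k\<bar> * fps_X ^ nat (gonal m k))"

lemma minus_one_power_add_eq_abs_diff:
  "(-1 :: 'a::ring_1) ^ (i + j) = (-1) ^ nat \<bar>int i - int j\<bar>"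
proof -
  have "even (i + j) \<longleftrightarrow> even (nat \<bar>int i - int j\<bar>)"
    by (cases "j \<le> i") (auto simp: le_iff_add nat_add_distrib)
  then show ?thesis by (simp add: minus_one_power_iff)
qed

lemma jtp_degree_eq_gonal:
  assumes "2 \<le> m" "i \<le> 2 * N"
  shows "2 * N - i + m * jtp_exponent (2 * N) i = N + nat (gonal m (int i - int N))"
proof -
  have "int (2 * N - i + m * jtp_exponent (2 * N) i) = int N + gonal m (int i - int N)"
    using assms(2) by (simp add: of_nat_diff int_jtp_exponent gonal_def)
  moreover have "0 \<le> gonal m (int i - int N)"
    using abs_le_gonal[of m "int i - int N"] assms(1) by simp
  ultimately have "int (2 * N - i + m * jtp_exponent (2 * N) i) = int (N + nat (gonal m (int i - int N)))"
    by simp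
  then show ?thesis by (simp only: of_nat_eq_iff)
qed

lemma X_power_mult_euler_product_admissible:
  assumes "3 \<le> m"
  defines "q \<equiv> fps_X ^ m :: 'a::idom fps"
  shows "fps_X ^ N * euler_product {d. admissible m d} (m * N) =
         (\<Sum>i=0..2*N. (-1) ^ (i + N) *
            (qbinom q (2 * N) i * qpochhammer q N * fps_X ^ (N + nat (gonal m (int i - int N)))))"
proof -
  have q_nonzero: "qpochhammer q k \<noteq> 0" for k
  proof -
    have "qpochhammer q k $ 0 = 1" using assms by (simp add: q_def)
    then show ?thesis by (metis fps_zero_nth zero_neq_one)
  qed
  have degree: "fps_X ^ (2 * N - i) * q ^ jtp_exponent (2 * N) i = fps_X ^ (N + nat (gonal m (int i - int N)))"
    if "i \<le> 2 * N" for i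
    using jtp_degree_eq_gonal[of m i N] assms(1) that
    by (simp add: q_def power_mult[symmetric] power_add[symmetric])
  have "(-1) ^ N * (\<Prod>l=1..2*N. jtp_factor (-1) fps_X q l) = fps_X ^ N * unit_residue_product m N"
  proof -
    have sign: "((-1) ^ N * (-1) ^ N :: 'a fps) = 1" by (simp flip: power_add)
    have "0 < m" using assms(1) by simp
    then show ?thesis
      unfolding q_def prod_jtp_factor_X_power[OF \<open>0 < m\<close>] mult.assoc[symmetric] sign by simp
  qed
  then have "fps_X ^ N * euler_product {d. admissible m d} (m * N) =
        qpochhammer q N * ((-1) ^ N * (\<Prod>l=1..2*N. jtp_factor (-1) fps_X q l))"
    unfolding euler_product_admissible[OF assms(1)] by (simp only: q_def mult_ac)
  also have "\<dots> = (-1) ^ N * qpochhammer q N * (\<Prod>l=1..2*N. jtp_factor (-1) fps_X q l)"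
    by (simp only: mult_ac)
  also have "\<dots> = (-1) ^ N * qpochhammer q N * jtp_sum (-1) fps_X q (2 * N)"
    by (simp only: finite_jacobi_triple_product[OF q_nonzero])
  also have "\<dots> = (\<Sum>i=0..2*N. (-1) ^ (i + N) *
            (qbinom q (2 * N) i * qpochhammer q N * fps_X ^ (N + nat (gonal m (int i - int N)))))"
    unfolding jtp_sum_def sum_distrib_left
  proof (rule sum.cong[OF refl])
    fix i assume "i \<in> {0..2*N}"
    then have i: "i \<le> 2 * N" by simp
    have "(-1) ^ N * qpochhammer q N * (qbinom q (2 * N) i * (-1) ^ i * fps_X ^ (2 * N - i) * q ^ jtp_exponent (2 * N) i)
        = (-1) ^ (i + N) * (qbinom q (2 * N) i * qpochhammer q N * (fps_X ^ (2 * N - i) * q ^ jtp_exponent (2 * N) i))"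
      by (simp only: power_add mult_ac)
    then show "(-1) ^ N * qpochhammer q N * (qbinom q (2 * N) i * (-1) ^ i * fps_X ^ (2 * N - i) * q ^ jtp_exponent (2 * N) i)
        = (-1) ^ (i + N) * (qbinom q (2 * N) i * qpochhammer q N * fps_X ^ (N + nat (gonal m (int i - int N))))"
      by (simp only: degree[OF i])
  qed
  finally show ?thesis .
qed

lemma X_power_mult_gonal_series:
  "fps_X ^ N * gonal_series m N =
   (\<Sum>i=0..2*N. (-1) ^ (i + N) * fps_X ^ (N + nat (gonal m (int i - int N))) :: 'a::comm_ring_1 fps)"
  unfolding gonal_series_def sum_distrib_left
  by (rule sum.reindex_bij_witness[where i = "\<lambda>i. int i - int N" and j = "\<lambda>k. nat (k + int N)"])
     (auto simp: minus_one_power_add_eq_abs_diff power_add[of fps_X] mult_ac)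

theorem euler_product_agree_gonal_series:
  assumes "3 \<le> m"
  shows "agree_below N (euler_product {d. admissible m d} (m * N)) (gonal_series m N :: 'a::idom fps)"
proof (rule agree_below_X_power_mult_cancel)
  let ?q = "fps_X ^ m :: 'a fps"
  let ?c = "\<lambda>i. N + nat (gonal m (int i - int N))"
  show "agree_below (N + N) (fps_X ^ N * euler_product {d. admissible m d} (m * N))
                            (fps_X ^ N * gonal_series m N :: 'a fps)"
    unfolding X_power_mult_euler_product_admissible[OF assms] X_power_mult_gonal_series
  proof (intro agree_below_sum agree_below_mult agree_below_refl)
    fix i assume i: "i \<in> {0..2*N}"
    have "agree_below (m * (min i (2 * N - i) + 1) + ?c i)
            (qbinom ?q (2 * N) i * qpochhammer ?q N * fps_X ^ ?c i) (fps_X ^ ?c i)"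
      using i assms by (intro agree_below_mult_X_power agree_below_qbinom_X_power) auto
    moreover have "N + N \<le> m * (min i (2 * N - i) + 1) + ?c i"
    proof -
      have "\<bar>int i - int N\<bar> \<le> gonal m (int i - int N)"
        using assms by (intro abs_le_gonal) simp
      then have "N - i \<le> nat (gonal m (int i - int N))" "i - N \<le> nat (gonal m (int i - int N))"
        by (simp_all add: le_nat_iff of_nat_diff)
      then have "N + N \<le> min i (2 * N - i) + 1 + ?c i"
        using i by (auto simp: min_def)
      moreover have "min i (2 * N - i) + 1 \<le> m * (min i (2 * N - i) + 1)"
        using mult_le_mono1[of 1 m "min i (2 * N - i) + 1"] assms by simp
      ultimately show ?thesis by linarith
    qed
    ultimately show "agree_below (N + N)
            (qbinom ?q (2 * N) i * qpochhammer ?q N * fps_X ^ ?c i) (fps_X ^ ?c i)"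
      by (rule agree_below_mono)
  qed
qed

section \<open>Comparing coefficients\<close>

lemma minus_one_power_mult_nth [simp]: "((-1) ^ k * f) $ n = (-1) ^ k * (f :: 'a::comm_ring_1 fps) $ n"
  by (induction k) (simp_all add: mult.assoc mult_minus1)

lemma sum_nth_signed_monomials:
  assumes "finite K"
  shows "(\<Sum>j=0..n. f j * (\<Sum>k\<in>K. (-1) ^ s k * fps_X ^ e k) $ j) =
         (\<Sum>k\<in>K. if e k \<le> n then (-1) ^ s k * f (e k) else (0 :: 'a::comm_ring_1))"
proof -
  have "(\<Sum>j=0..n. f j * (\<Sum>k\<in>K. (-1) ^ s k * fps_X ^ e k) $ j) =
        (\<Sum>j=0..n. \<Sum>k\<in>K. if j = e k then (-1) ^ s k * f j else 0)"
    by (intro sum.cong refl) (auto simp: fps_sum_nth sum_distrib_left intro!: sum.cong)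
  also have "\<dots> = (\<Sum>k\<in>K. \<Sum>j=0..n. if j = e k then (-1) ^ s k * f j else 0)"
    by (rule sum.swap)
  finally show ?thesis by (simp add: sum.delta)
qed

lemma signed_gonal_sum_eq_minus_sigma':
  assumes "3 \<le> m" "0 < n" "n < N"
  shows "(\<Sum>k \<in> {-int N..int N}. (-1) ^ nat \<bar>k\<bar> *
            (of_int (gonal m k) * real (p' m (int n - gonal m k)))) = - real (sigma' m n)"
proof -
  let ?A = "{d. admissible m d}"
  let ?p = "\<lambda>j. real (card (restricted_partitions ?A (n - j)))"
  have "N \<le> m * N" using assms(1) by simp
  then have "n \<le> m * N" using assms(3) by linarith
  then have "- real (sigma' m n) = (\<Sum>j=0..n. of_nat j * ?p j * euler_product ?A (m * N) $ j)"
    by (simp add: sum_coeffs_euler_product_partitions[OF assms(2)] sigma'_eq_divisor_sum)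
  also have "\<dots> = (\<Sum>j=0..n. of_nat j * ?p j * gonal_series m N $ j)"
  proof -
    have "(euler_product ?A (m * N) :: real fps) $ j = gonal_series m N $ j" if "j \<le> n" for j
      using euler_product_agree_gonal_series[OF assms(1), of N] le_less_trans[OF that assms(3)]
      unfolding agree_below_def by blast
    then show ?thesis by (intro sum.cong refl) simp
  qed
  also have "\<dots> = (\<Sum>k \<in> {-int N..int N}. if nat (gonal m k) \<le> n
                    then (-1) ^ nat \<bar>k\<bar> * (of_nat (nat (gonal m k)) * ?p (nat (gonal m k))) else 0)"
    unfolding gonal_series_def by (rule sum_nth_signed_monomials) simp
  also have "\<dots> = (\<Sum>k \<in> {-int N..int N}. (-1) ^ nat \<bar>k\<bar> *
                    (of_int (gonal m k) * real (p' m (int n - gonal m k))))"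
  proof (rule sum.cong[OF refl])
    fix k :: int
    let ?g = "gonal m k"
    have "0 \<le> ?g" using abs_le_gonal[of m k] assms(1) by simp
    show "(if nat ?g \<le> n then (-1) ^ nat \<bar>k\<bar> * (of_nat (nat ?g) * ?p (nat ?g)) else 0) =
          (-1) ^ nat \<bar>k\<bar> * (of_int ?g * real (p' m (int n - ?g)))"
    proof (cases "nat ?g \<le> n")
      case True
      then have "0 \<le> int n - ?g" "nat (int n - ?g) = n - nat ?g" using \<open>0 \<le> ?g\<close> by auto
      then show ?thesis using True \<open>0 \<le> ?g\<close> by (simp add: p'_eq_card_restricted_partitions)
    next
      case False
      then show ?thesis by (simp add: p'_def)
    qed
  qed
  finally show ?thesis by simp
qed

lemma sum_symmetric_int_interval:
  "(\<Sum>k \<in> {-int N..int N}. h k) + h 0 = (\<Sum>k\<le>N. h (int k) + h (- int k))"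
proof (induction N)
  case (Suc N)
  have "{-int (Suc N)..int (Suc N)} = insert (int (Suc N)) (insert (- int (Suc N)) {-int N..int N})"
    by auto
  then have "(\<Sum>k \<in> {-int (Suc N)..int (Suc N)}. h k) =
             h (int (Suc N)) + (h (- int (Suc N)) + (\<Sum>k \<in> {-int N..int N}. h k))"
    by simp
  moreover have "(\<Sum>k\<le>Suc N. h (int k) + h (- int k)) =
                 (\<Sum>k\<le>N. h (int k) + h (- int k)) + (h (int (Suc N)) + h (- int (Suc N)))"
    by simp
  ultimately show ?case unfolding Suc.IH[symmetric] by (simp add: add_ac)
qed simp

theorem theorem2p8:
  fixes m n :: nat
  assumes "m \<ge> 3" and "n \<ge> 1"
  shows "(\<lambda>k. (-1) ^ (k + 1) *
            (of_int (Pgon m k) * real (p' m (int n - Pgon m k))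
             + of_int (Qgon m k) * real (p' m (int n - Qgon m k))))
         sums real (sigma' m n)"
proof -
  define h where "h = (\<lambda>k. (-1) ^ nat \<bar>k\<bar> * (of_int (gonal m k) * real (p' m (int n - gonal m k))))"
  let ?f = "\<lambda>k. (-1) ^ (k + 1) *
            (of_int (Pgon m k) * real (p' m (int n - Pgon m k))
             + of_int (Qgon m k) * real (p' m (int n - Qgon m k)))"
  have f_eq: "?f k = - (h (int k) + h (- int k))" for k
    unfolding h_def Pgon_eq_gonal Qgon_eq_gonal by (simp add: algebra_simps)
  have "(\<Sum>k \<in> {-int (Suc n)..int (Suc n)}. h k) = - real (sigma' m n)"
    unfolding h_def using assms by (intro signed_gonal_sum_eq_minus_sigma') auto
  moreover have "h 0 = 0" by (simp add: h_def gonal_def triangular_def)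
  ultimately have sum_eq: "(\<Sum>k\<le>Suc n. ?f k) = real (sigma' m n)"
    unfolding f_eq sum_negf sum_symmetric_int_interval[of h, symmetric] by simp
  have "?f sums (\<Sum>k\<le>Suc n. ?f k)"
    using assms(1) by (intro sums_finite) (simp_all add: Pgon_eq_gonal Qgon_eq_gonal p'_minus_gonal_eq_0)
  then show ?thesis unfolding sum_eq .
qed

end
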